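(* Every atomic flow is the atomic flow associated with some $\mathsf{SKS}$ derivation.
   Context: Formulae are built from the units $\mathsf f$ and $\mathsf t$, atoms $a,b,\dots$, disjunction $[\alpha\vee\beta]$ and conjunction $(\alpha\wedge\beta)$; on atoms there is an involution $a\mapsto\bar a$ with $\bar a\neq a$. A context $\xi\{\ \}$ is a formula with a hole. An inference step of a rule $\alpha/\beta$ rewrites $\xi\{\alpha\}$ into $\xi\{\beta\}$ for an arbitrary context $\xi$. A derivation is a finite chain of inference steps. System $\mathsf{SKS}$ consists of: interaction $\mathsf{ai}{\downarrow}$: $\mathsf t/[a\vee\bar a]$; weakening $\mathsf{aw}{\downarrow}$: $\mathsf f/a$; contraction $\mathsf{ac}{\downarrow}$: $[a\vee a]/a$; cut $\mathsf{ai}{\uparrow}$: $(a\wedge\bar a)/\mathsf f$; coweakening $\mathsf{aw}{\uparrow}$: $a/\mathsf t$; cocontraction $\mathsf{ac}{\uparrow}$: $a/(a\wedge a)$; switch $(\alpha\wedge[\beta\vee\gamma])/[(\alpha\wedge\beta)\vee\gamma]$; medial $[(\alpha\wedge\beta)\vee(\gamma\wedge\delta)]/([\alpha\vee\gamma]\wedge[\beta\vee\delta])$; and $\gamma/\delta$ whenever $\gamma=\delta$ is (either direction of) an instance of commutativity or associativity of $\vee$, $\wedge$, $[\alpha\vee\mathsf f]=\alpha$, $(\alpha\wedge\mathsf t)=\alpha$, $[\mathsf t\vee\mathsf t]=\mathsf t$, $(\mathsf f\wedge\mathsf f)=\mathsf f$. An atomic flow is a tuple $(V,E,\eta,up,lo)$: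 finite sets $V$ (vertices) and $E$ (edges), a labelling $\eta$ of vertices by interaction, cut, weakening, coweakening, contraction or cocontraction, and maps $up:E\to V\cup\{\top\}$, $lo:E\to V\cup\{\bot\}$ with $\top,\bot\notin V$. Upper edges of a vertex $\nu$ are those with $lo(\epsilon)=\nu$, lower edges those with $up(\epsilon)=\nu$. The (upper, lower) edge numbers are $(0,2)$ for interaction, $(2,0)$ for cut, $(0,1)$ for weakening, $(1,0)$ for coweakening, $(2,1)$ for contraction, $(1,2)$ for cocontraction; the directed graph has no directed cycle; and there is $\pi:E\to\{+,-\}$ giving all edges of each (co)contraction vertex the same sign and the two edges of each interaction/cut vertex different signs. Flows are considered up to isomorphism. The atomic flow associated with an $\mathsf{SKS}$ derivation $\Phi$: each atom occurrence of $\Phi$ is mapped to an edge (surjectively); in each inference step, occurrences in the context (and, for switch, medial and $=$, in the subformulae instantiating $\alpha,\beta,\gamma,\delta$) are mapped to the same edges in the step's premiss and conclusion; each step of one of the six atomic rules gives a vertex labelled by that rule whose upper edges are the atom occurrences of the redex in the step's premiss and whose lower edges are those in the redex of the step's conclusion; atom occurrences in the premiss of $\Phi$ are edges with $up=\top$, those in the conclusion edges with $lo=\bot$. *)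

theory Defs
  imports Main
begin

text \<open>Atoms: a countable supply of atoms; atom (n, True) is a, atom (n, False) its dual.\<close>
type_synonym atom = "nat \<times> bool"

definition bar :: "atom \<Rightarrow> atom" where
  "bar a = (fst a, \<not> snd a)"

text \<open>Formulae whose atom occurrences carry an edge label (the edge of the atomic flow
  the occurrence is mapped to).\<close>
datatype aform = FF | TT | At atom nat | Dis aform aform | Con aform aform

fun labs :: "aform \<Rightarrow> nat list" where
  "labs FF = []"
| "labs TT = []"
| "labs (At a e) = [e]"
| "labs (Dis A B) = labs A @ labs B"
| "labs (Con A B) = labs A @ labs B"

datatype ctx = Hole | DisL ctx aform | DisR aform ctx | ConL ctx aform | ConR aform ctx

fun fill :: "ctx \<Rightarrow> aform \<Rightarrow> aform" where
  "fill Hole A = A"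
| "fill (DisL c B) A = Dis (fill c A) B"
| "fill (DisR B c) A = Dis B (fill c A)"
| "fill (ConL c B) A = Con (fill c A) B"
| "fill (ConR B c) A = Con B (fill c A)"

text \<open>Equations (one direction; both directions are allowed as rules).\<close>
inductive eqn :: "aform \<Rightarrow> aform \<Rightarrow> bool" where
  comm_dis: "eqn (Dis A B) (Dis B A)"
| comm_con: "eqn (Con A B) (Con B A)"
| assoc_dis: "eqn (Dis (Dis A B) C) (Dis A (Dis B C))"
| assoc_con: "eqn (Con (Con A B) C) (Con A (Con B C))"
| unit_dis: "eqn (Dis A FF) A"
| unit_con: "eqn (Con A TT) A"
| tt: "eqn (Dis TT TT) TT"
| ff: "eqn (Con FF FF) FF"

text \<open>Non-atomic rules: occurrences in the instantiating subformulae keep their labels.\<close>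
inductive nonatomic :: "aform \<Rightarrow> aform \<Rightarrow> bool" where
  switch: "nonatomic (Con A (Dis B C)) (Dis (Con A B) C)"
| medial: "nonatomic (Dis (Con A B) (Con C D)) (Con (Dis A C) (Dis B D))"
| eq_fw: "eqn A B \<Longrightarrow> nonatomic A B"
| eq_bw: "eqn B A \<Longrightarrow> nonatomic A B"

datatype rule_kind = Interaction | Cut | Weakening | Coweakening | Contraction | Cocontraction

inductive atomic_rule :: "rule_kind \<Rightarrow> aform \<Rightarrow> aform \<Rightarrow> bool" where
  ai_down: "atomic_rule Interaction TT (Dis (At a e1) (At (bar a) e2))"
| aw_down: "atomic_rule Weakening FF (At a e)"
| ac_down: "atomic_rule Contraction (Dis (At a e1) (At a e2)) (At a e3)"
| ai_up: "atomic_rule Cut (Con (At a e1) (At (bar a) e2)) FF"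
| aw_up: "atomic_rule Coweakening (At a e) TT"
| ac_up: "atomic_rule Cocontraction (At a e) (Con (At a e1) (At a e2))"

text \<open>A derivation is a list of formulae fs = [phi_0, ..., phi_n] together with the list ks
  of the rules of its n steps (None for switch/medial/equations, Some k for an atomic rule k).
  Labels are distinct within each formula; occurrences in the context (and in the instantiated
  subformulae of non-atomic rules) keep their labels; the atom occurrences of the redex in the
  conclusion of an atomic step get fresh labels (new edges).\<close>
definition sks_derivation :: "aform list \<Rightarrow> rule_kind option list \<Rightarrow> bool" where
  "sks_derivation fs ks \<longleftrightarrow>
     fs \<noteq> [] \<and> length fs = Suc (length ks) \<and>
     (\<forall>j < length fs. distinct (labs (fs ! j))) \<and>
     (\<forall>i < length ks.
        (ks ! i = None \<longrightarrow>
           (\<exists>c A B. fs ! i = fill c A \<and> fs ! Suc i = fill c B \<and> nonatomic A B)) \<and>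
        (\<forall>k. ks ! i = Some k \<longrightarrow>
           (\<exists>c A B. fs ! i = fill c A \<and> fs ! Suc i = fill c B \<and> atomic_rule k A B \<and>
              (\<forall>j \<le> i. \<forall>e \<in> set (labs B). e \<notin> set (labs (fs ! j))))))"

text \<open>up e = None means up(e) = top, lo e = None means lo(e) = bottom.\<close>
record ('v, 'e) flow =
  fV :: "'v set"
  fE :: "'e set"
  eta :: "'v \<Rightarrow> rule_kind"
  up :: "'e \<Rightarrow> 'v option"
  lo :: "'e \<Rightarrow> 'v option"

fun edge_numbers :: "rule_kind \<Rightarrow> nat \<times> nat" where
  "edge_numbers Interaction = (0, 2)"
| "edge_numbers Cut = (2, 0)"
| "edge_numbers Weakening = (0, 1)"
| "edge_numbers Coweakening = (1, 0)"
| "edge_numbers Contraction = (2, 1)"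
| "edge_numbers Cocontraction = (1, 2)"

definition upper_edges :: "('v, 'e) flow \<Rightarrow> 'v \<Rightarrow> 'e set" where
  "upper_edges F v = {e \<in> fE F. lo F e = Some v}"

definition lower_edges :: "('v, 'e) flow \<Rightarrow> 'v \<Rightarrow> 'e set" where
  "lower_edges F v = {e \<in> fE F. up F e = Some v}"

definition flow_graph :: "('v, 'e) flow \<Rightarrow> ('v \<times> 'v) set" where
  "flow_graph F = {(u, w). \<exists>e \<in> fE F. up F e = Some u \<and> lo F e = Some w}"

definition atomic_flow :: "('v, 'e) flow \<Rightarrow> bool" where
  "atomic_flow F \<longleftrightarrow>
     finite (fV F) \<and> finite (fE F) \<and>
     (\<forall>e \<in> fE F. (up F e = None \<or> the (up F e) \<in> fV F) \<and>
                  (lo F e = None \<or> the (lo F e) \<in> fV F)) \<and>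
     (\<forall>v \<in> fV F. card (upper_edges F v) = fst (edge_numbers (eta F v)) \<and>
                  card (lower_edges F v) = snd (edge_numbers (eta F v))) \<and>
     acyclic (flow_graph F) \<and>
     (\<exists>pol :: 'e \<Rightarrow> bool.
        \<forall>v \<in> fV F.
          (eta F v \<in> {Contraction, Cocontraction} \<longrightarrow>
             (\<forall>e \<in> upper_edges F v \<union> lower_edges F v.
                \<forall>e' \<in> upper_edges F v \<union> lower_edges F v. pol e = pol e')) \<and>
          (eta F v = Interaction \<longrightarrow>
             (\<forall>e \<in> lower_edges F v. \<forall>e' \<in> lower_edges F v. e \<noteq> e' \<longrightarrow> pol e \<noteq> pol e')) \<and>
          (eta F v = Cut \<longrightarrow>
             (\<forall>e \<in> upper_edges F v. \<forall>e' \<in> upper_edges F v. e \<noteq> e' \<longrightarrow> pol e \<noteq> pol e')))"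

definition flow_iso :: "('v, 'e) flow \<Rightarrow> ('w, 'd) flow \<Rightarrow> bool" where
  "flow_iso F G \<longleftrightarrow>
     (\<exists>f g. bij_betw f (fV F) (fV G) \<and> bij_betw g (fE F) (fE G) \<and>
        (\<forall>v \<in> fV F. eta G (f v) = eta F v) \<and>
        (\<forall>e \<in> fE F. up G (g e) = map_option f (up F e) \<and> lo G (g e) = map_option f (lo F e)))"

definition flow_of :: "aform list \<Rightarrow> rule_kind option list \<Rightarrow> (nat, nat) flow" where
  "flow_of fs ks =
     \<lparr> fV = {i. i < length ks \<and> ks ! i \<noteq> None},
       fE = (\<Union>j < length fs. set (labs (fs ! j))),
       eta = (\<lambda>i. the (ks ! i)),
       up = (\<lambda>e. if e \<in> set (labs (fs ! 0)) then None
                 else Some (LEAST i. i < length ks \<and> e \<notin> set (labs (fs ! i))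
                                     \<and> e \<in> set (labs (fs ! Suc i)))),
       lo = (\<lambda>e. if e \<in> set (labs (last fs)) then None
                 else Some (LEAST i. i < length ks \<and> e \<in> set (labs (fs ! i))
                                     \<and> e \<notin> set (labs (fs ! Suc i)))) \<rparr>"

end

theory Submission
  imports Defs "HOL-Library.Multiset"
begin

text \<open>Sort the vertices topologically and build the derivation one vertex at a time. Before a
  vertex is processed, the current formula is a disjunction of one atom occurrence for each edge
  crossing the cut between processed and unprocessed vertices. Switch, medial and the equations
  bring the upper edges of the next vertex to the front of this disjunction in the shape of the
  redex of its atomic rule (for a cut this needs a conjunction, which the units provide); the rule
  is applied and the result is turned back into a disjunction. Labelling the edges injectively and
  choosing between a and its dual according to the polarity of the edge, every atomic step creates
  exactly the lower edges of its vertex and consumes its upper edges, so the flow of the derivation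
  is the given one up to the numbering of vertices and edges.\<close>

fun somes :: "'a option list \<Rightarrow> 'a list" where
  "somes [] = []"
| "somes (None # xs) = somes xs"
| "somes (Some x # xs) = x # somes xs"

lemma somes_append [simp]: "somes (xs @ ys) = somes xs @ somes ys"
  by (induction xs rule: somes.induct) auto

lemma somes_map_Some [simp]: "somes (map Some xs) = xs"
  by (induction xs) auto

lemma Some_in_set_iff: "Some x \<in> set xs \<longleftrightarrow> x \<in> set (somes xs)"
  by (induction xs rule: somes.induct) auto

lemma somes_remove1: "somes (remove1 (Some x) xs) = remove1 x (somes xs)"
  by (induction xs rule: somes.induct) auto

lemma somes_split:
  assumes "i < length xs" "xs ! i = Some v"
  shows "somes xs = somes (take i xs) @ v # somes (drop (Suc i) xs)"
proof -
  have "xs = take i xs @ Some v # drop (Suc i) xs"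
    using id_take_nth_drop[OF assms(1)] assms(2) by simp
  then show ?thesis
    by (metis somes.simps(3) somes_append)
qed

lemma set_somes_take_mono:
  assumes "i \<le> j"
  shows "set (somes (take i xs)) \<subseteq> set (somes (take j xs))"
proof -
  have "take j xs = take i xs @ take (j - i) (drop i xs)"
    using take_add[of i "j - i" xs] assms by simp
  then have "set (somes (take j xs)) = set (somes (take i xs)) \<union> set (somes (take (j - i) (drop i xs)))"
    by simp
  then show ?thesis
    by blast
qed

lemma set_somes_take_Suc:
  "i < length xs \<Longrightarrow> set (somes (take (Suc i) xs)) = set (somes (take i xs)) \<union> set (somes [xs ! i])"
  by (simp add: take_Suc_conv_app_nth)

lemma somes_nth_unique:
  assumes "distinct (somes xs)" "i < length xs" "j < length xs" "xs ! i = Some v" "xs ! j = Some v"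
  shows "i = j"
proof -
  have False if "l < k" "k < length xs" "xs ! k = Some v" "xs ! l = Some v" for k l
  proof -
    have "Some v \<in> set (take k xs)"
      using that by (auto simp: in_set_conv_nth intro!: exI[of _ l])
    moreover have "v \<notin> set (somes (take k xs))"
      using somes_split[OF that(2,3)] assms(1) by auto
    ultimately show False
      by (simp add: Some_in_set_iff)
  qed
  then show ?thesis
    using assms(2-5) by (meson linorder_neqE_nat)
qed

section \<open>Topological orderings\<close>

fun topo_sorted :: "('a \<times> 'a) set \<Rightarrow> 'a list \<Rightarrow> bool" where
  "topo_sorted r [] \<longleftrightarrow> True"
| "topo_sorted r (x # xs) \<longleftrightarrow> (x, x) \<notin> r \<and> (\<forall>v \<in> set xs. (v, x) \<notin> r) \<and> topo_sorted r xs"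

lemma topo_sorted_append:
  "topo_sorted r (xs @ ys) \<longleftrightarrow>
    topo_sorted r xs \<and> topo_sorted r ys \<and> (\<forall>u \<in> set xs. \<forall>v \<in> set ys. (v, u) \<notin> r)"
  by (induction xs) auto

lemma topo_sorted_no_back_edge:
  "topo_sorted r (xs @ v # ys) \<Longrightarrow> u \<in> insert v (set xs) \<Longrightarrow> (v, u) \<notin> r"
  by (auto simp: topo_sorted_append)

lemma topo_sorted_no_edge_from_later:
  "topo_sorted r (xs @ v # ys) \<Longrightarrow> u \<in> insert v (set ys) \<Longrightarrow> (u, v) \<notin> r"
  by (auto simp: topo_sorted_append)

lemma topo_sorted_exists:
  assumes "finite r" "acyclic r" "finite S"
  shows "\<exists>vs. distinct vs \<and> set vs = S \<and> topo_sorted r vs"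
  using assms(3)
proof (induction "card S" arbitrary: S)
  case 0
  then show ?case by (intro exI[of _ "[]"]) simp
next
  case (Suc n)
  then obtain x where "x \<in> S" by fastforce
  then obtain m where m: "m \<in> S" "\<And>u. (u, m) \<in> r \<Longrightarrow> u \<notin> S"
    using wfE_min[OF finite_acyclic_wf[OF assms(1,2)]] by metis
  have "n = card (S - {m})"
    using Suc.hyps(2) Suc.prems m(1) by simp
  then obtain vs where vs: "distinct vs" "set vs = S - {m}" "topo_sorted r vs"
    using Suc.hyps(1) Suc.prems by blast
  have "topo_sorted r (m # vs)"
    using vs m by auto
  then show ?case
    using vs m(1) by (intro exI[of _ "m # vs"]) auto
qed

section \<open>Rearranging formulae by switch, medial and the equations\<close>

definition nstep :: "aform \<Rightarrow> aform \<Rightarrow> bool" where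
  "nstep A B \<longleftrightarrow> (\<exists>c X Y. A = fill c X \<and> B = fill c Y \<and> nonatomic X Y)"

lemma mset_labs_fill: "mset (labs (fill c X)) = mset (labs (fill c FF)) + mset (labs X)"
  by (induction c) (auto simp: ac_simps)

lemma set_labs_fill: "set (labs (fill c X)) = set (labs (fill c FF)) \<union> set (labs X)"
  by (metis mset_labs_fill set_mset_mset set_mset_union)

lemma distinct_labs_fill:
  "distinct (labs (fill c X)) \<Longrightarrow> set (labs (fill c FF)) \<inter> set (labs X) = {}"
  by (metis distinct_append mset_append mset_eq_imp_distinct_iff mset_labs_fill)

lemma nonatomic_mset_labs: "nonatomic X Y \<Longrightarrow> mset (labs X) = mset (labs Y)"
proof -
  have eqn: "eqn X Y \<Longrightarrow> mset (labs X) = mset (labs Y)" for X Y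
    by (induction rule: eqn.induct) (auto simp: ac_simps)
  show "nonatomic X Y \<Longrightarrow> mset (labs X) = mset (labs Y)"
    by (induction rule: nonatomic.induct) (auto simp: ac_simps eqn)
qed

lemma nsteps_mset_labs: "nstep\<^sup>*\<^sup>* A B \<Longrightarrow> mset (labs A) = mset (labs B)"
proof (induction rule: rtranclp_induct)
  case (step B C)
  then show ?case unfolding nstep_def by (metis mset_labs_fill nonatomic_mset_labs)
qed simp

lemma nsteps_distinct_labs: "nstep\<^sup>*\<^sup>* A B \<Longrightarrow> distinct (labs A) \<longleftrightarrow> distinct (labs B)"
  by (metis nsteps_mset_labs mset_eq_imp_distinct_iff)

fun ctx_comp :: "ctx \<Rightarrow> ctx \<Rightarrow> ctx" where
  "ctx_comp Hole c = c"
| "ctx_comp (DisL d B) c = DisL (ctx_comp d c) B"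
| "ctx_comp (DisR B d) c = DisR B (ctx_comp d c)"
| "ctx_comp (ConL d B) c = ConL (ctx_comp d c) B"
| "ctx_comp (ConR B d) c = ConR B (ctx_comp d c)"

lemma fill_ctx_comp: "fill (ctx_comp d c) X = fill d (fill c X)"
  by (induction d) auto

lemma nsteps_fill: "nstep\<^sup>*\<^sup>* A B \<Longrightarrow> nstep\<^sup>*\<^sup>* (fill c A) (fill c B)"
proof (induction rule: rtranclp_induct)
  case (step B C)
  then have "nstep (fill c B) (fill c C)"
    unfolding nstep_def by (metis fill_ctx_comp)
  with step.IH show ?case by simp
qed simp

lemma nsteps_nonatomic: "nonatomic X Y \<Longrightarrow> nstep\<^sup>*\<^sup>* X Y"
proof (rule r_into_rtranclp)
  show "nonatomic X Y \<Longrightarrow> nstep X Y"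
    unfolding nstep_def by (metis fill.simps(1))
qed

lemma nsteps_congs:
  "nstep\<^sup>*\<^sup>* A A' \<Longrightarrow> nstep\<^sup>*\<^sup>* (Dis A B) (Dis A' B)"
  "nstep\<^sup>*\<^sup>* B B' \<Longrightarrow> nstep\<^sup>*\<^sup>* (Dis A B) (Dis A B')"
  "nstep\<^sup>*\<^sup>* A A' \<Longrightarrow> nstep\<^sup>*\<^sup>* (Con A B) (Con A' B)"
  "nstep\<^sup>*\<^sup>* B B' \<Longrightarrow> nstep\<^sup>*\<^sup>* (Con A B) (Con A B')"
  using nsteps_fill[of A A' "DisL Hole B"] nsteps_fill[of B B' "DisR A Hole"]
    nsteps_fill[of A A' "ConL Hole B"] nsteps_fill[of B B' "ConR A Hole"] by simp_all

lemmas nsteps_intros = nsteps_congs nsteps_nonatomic nonatomic.intros eqn.intros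

declare rtranclp_trans [trans]

lemma nsteps_Dis_TT_left: "nstep\<^sup>*\<^sup>* A (Dis TT A)"
proof -
  have "nstep\<^sup>*\<^sup>* A (Con A TT)" by (intro nsteps_intros)
  also have "nstep\<^sup>*\<^sup>* \<dots> (Con A (Dis TT TT))" by (intro nsteps_intros)
  also have "nstep\<^sup>*\<^sup>* \<dots> (Dis (Con A TT) TT)" by (intro nsteps_intros)
  also have "nstep\<^sup>*\<^sup>* \<dots> (Dis A TT)" by (intro nsteps_intros)
  also have "nstep\<^sup>*\<^sup>* \<dots> (Dis TT A)" by (intro nsteps_intros)
  finally show ?thesis .
qed

lemma nsteps_Dis_FF_left: "nstep\<^sup>*\<^sup>* A (Dis FF A)"
proof -
  have "nstep\<^sup>*\<^sup>* A (Dis A FF)" by (intro nsteps_intros)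
  also have "nstep\<^sup>*\<^sup>* \<dots> (Dis FF A)" by (intro nsteps_intros)
  finally show ?thesis .
qed

lemma nsteps_Dis_swap: "nstep\<^sup>*\<^sup>* (Dis X (Dis Y R)) (Dis Y (Dis X R))"
proof -
  have "nstep\<^sup>*\<^sup>* (Dis X (Dis Y R)) (Dis (Dis X Y) R)" by (intro nsteps_intros)
  also have "nstep\<^sup>*\<^sup>* \<dots> (Dis (Dis Y X) R)" by (intro nsteps_intros)
  also have "nstep\<^sup>*\<^sup>* \<dots> (Dis Y (Dis X R))" by (intro nsteps_intros)
  finally show ?thesis .
qed

lemma nsteps_Con_to_Dis: "nstep\<^sup>*\<^sup>* (Con Y Z) (Dis Y (Dis Z TT))"
proof -
  have "nstep\<^sup>*\<^sup>* (Con Y Z) (Dis TT (Con Y Z))" by (rule nsteps_Dis_TT_left)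
  also have "nstep\<^sup>*\<^sup>* \<dots> (Dis (Con TT TT) (Con Y Z))" by (intro nsteps_intros)
  also have "nstep\<^sup>*\<^sup>* \<dots> (Con (Dis TT Y) (Dis TT Z))" by (intro nsteps_intros)
  also have "nstep\<^sup>*\<^sup>* \<dots> (Con (Dis Y TT) (Dis TT Z))" by (intro nsteps_intros)
  also have "nstep\<^sup>*\<^sup>* \<dots> (Dis (Con (Dis Y TT) TT) Z)" by (intro nsteps_intros)
  also have "nstep\<^sup>*\<^sup>* \<dots> (Dis (Dis Y TT) Z)" by (intro nsteps_intros)
  also have "nstep\<^sup>*\<^sup>* \<dots> (Dis Y (Dis TT Z))" by (intro nsteps_intros)
  also have "nstep\<^sup>*\<^sup>* \<dots> (Dis Y (Dis Z TT))" by (intro nsteps_intros)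
  finally show ?thesis .
qed

text \<open>The redex of a cut is a conjunction; the units produce one from a disjunction.\<close>

lemma nsteps_Dis_to_Con: "nstep\<^sup>*\<^sup>* (Dis X Y) (Dis (Dis (Con Y X) TT) TT)"
proof -
  have "nstep\<^sup>*\<^sup>* (Dis X Y) (Dis (Con X TT) Y)" by (intro nsteps_intros)
  also have "nstep\<^sup>*\<^sup>* \<dots> (Dis (Con X TT) (Con Y TT))" by (intro nsteps_intros)
  also have "nstep\<^sup>*\<^sup>* \<dots> (Dis (Con X TT) (Con TT Y))" by (intro nsteps_intros)
  also have "nstep\<^sup>*\<^sup>* \<dots> (Con (Dis X TT) (Dis TT Y))" by (intro nsteps_intros)
  also have "nstep\<^sup>*\<^sup>* \<dots> (Con (Dis X TT) (Dis Y TT))" by (intro nsteps_intros)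
  also have "nstep\<^sup>*\<^sup>* \<dots> (Dis (Con (Dis X TT) Y) TT)" by (intro nsteps_intros)
  also have "nstep\<^sup>*\<^sup>* \<dots> (Dis (Con Y (Dis X TT)) TT)" by (intro nsteps_intros)
  also have "nstep\<^sup>*\<^sup>* \<dots> (Dis (Dis (Con Y X) TT) TT)" by (intro nsteps_intros)
  finally show ?thesis .
qed

lemma nsteps_FF_TT_TT: "nstep\<^sup>*\<^sup>* (Dis (Dis FF TT) TT) TT"
proof -
  have "nstep\<^sup>*\<^sup>* (Dis (Dis FF TT) TT) (Dis (Dis TT FF) TT)" by (intro nsteps_intros)
  also have "nstep\<^sup>*\<^sup>* \<dots> (Dis TT TT)" by (intro nsteps_intros)
  also have "nstep\<^sup>*\<^sup>* \<dots> TT" by (intro nsteps_intros)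
  finally show ?thesis .
qed

definition flow_polarity :: "('v, 'e) flow \<Rightarrow> ('e \<Rightarrow> bool) \<Rightarrow> bool" where
  "flow_polarity F pol \<longleftrightarrow>
     (\<forall>v \<in> fV F.
        (eta F v \<in> {Contraction, Cocontraction} \<longrightarrow>
           (\<forall>e \<in> upper_edges F v \<union> lower_edges F v.
              \<forall>e' \<in> upper_edges F v \<union> lower_edges F v. pol e = pol e')) \<and>
        (eta F v = Interaction \<longrightarrow>
           (\<forall>e \<in> lower_edges F v. \<forall>e' \<in> lower_edges F v. e \<noteq> e' \<longrightarrow> pol e \<noteq> pol e')) \<and>
        (eta F v = Cut \<longrightarrow>
           (\<forall>e \<in> upper_edges F v. \<forall>e' \<in> upper_edges F v. e \<noteq> e' \<longrightarrow> pol e \<noteq> pol e')))"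

lemma atomic_flow_polarity: "atomic_flow F \<Longrightarrow> \<exists>pol. flow_polarity F pol"
  unfolding atomic_flow_def flow_polarity_def by blast

locale flow_labelling =
  fixes F :: "('v, 'e) flow" and enc :: "'e \<Rightarrow> nat" and pol :: "'e \<Rightarrow> bool"
  assumes atomic: "atomic_flow F" and enc_inj: "inj_on enc (fE F)" and polarity: "flow_polarity F pol"
begin

lemma finite_vertices: "finite (fV F)"
  and finite_edges: "finite (fE F)"
  and acyclic_graph: "acyclic (flow_graph F)"
  using atomic by (simp_all add: atomic_flow_def)

lemma edge_counts:
  "v \<in> fV F \<Longrightarrow> card (upper_edges F v) = fst (edge_numbers (eta F v)) \<and>
    card (lower_edges F v) = snd (edge_numbers (eta F v))"
  using atomic by (simp add: atomic_flow_def)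

lemma up_in_vertices: "e \<in> fE F \<Longrightarrow> up F e = Some u \<Longrightarrow> u \<in> fV F"
  and lo_in_vertices: "e \<in> fE F \<Longrightarrow> lo F e = Some u \<Longrightarrow> u \<in> fV F"
proof -
  have "\<forall>e \<in> fE F. (up F e = None \<or> the (up F e) \<in> fV F) \<and> (lo F e = None \<or> the (lo F e) \<in> fV F)"
    using atomic unfolding atomic_flow_def by (elim conjE) assumption
  then show "e \<in> fE F \<Longrightarrow> up F e = Some u \<Longrightarrow> u \<in> fV F" "e \<in> fE F \<Longrightarrow> lo F e = Some u \<Longrightarrow> u \<in> fV F"
    by fastforce+
qed

lemma upper_edges_subset: "upper_edges F v \<subseteq> fE F"
  and lower_edges_subset: "lower_edges F v \<subseteq> fE F"
  by (auto simp: upper_edges_def lower_edges_def)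

lemma finite_upper_edges: "finite (upper_edges F v)"
  and finite_lower_edges: "finite (lower_edges F v)"
  using finite_subset[OF upper_edges_subset finite_edges] finite_subset[OF lower_edges_subset finite_edges] .

lemma finite_graph: "finite (flow_graph F)"
proof -
  have "flow_graph F \<subseteq> (\<lambda>e. (the (up F e), the (lo F e))) ` fE F"
    unfolding flow_graph_def by force
  then show ?thesis using finite_edges finite_subset by blast
qed

lemma no_self_loop: "(v, v) \<notin> flow_graph F"
  using acyclic_graph unfolding acyclic_def by blast

lemma upper_lower_disjoint: "upper_edges F v \<inter> lower_edges F v = {}"
  using no_self_loop by (auto simp: upper_edges_def lower_edges_def flow_graph_def)

text \<open>The edges crossing the cut between the processed vertices T and the others; they are the
  atom occurrences of the formula reached once the rules of the vertices in T have been applied.\<close>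
definition alive :: "'v set \<Rightarrow> 'e set" where
  "alive T = {e \<in> fE F. (\<forall>u. up F e = Some u \<longrightarrow> u \<in> T) \<and> (\<forall>u. lo F e = Some u \<longrightarrow> u \<notin> T)}"

lemma alive_subset: "alive T \<subseteq> fE F"
  by (auto simp: alive_def)

lemma alive_empty: "alive {} = {e \<in> fE F. up F e = None}"
  by (auto simp: alive_def)

lemma alive_vertices: "alive (fV F) = {e \<in> fE F. lo F e = None}"
proof -
  have "e \<in> alive (fV F) \<longleftrightarrow> e \<in> fE F \<and> lo F e = None" for e
    using up_in_vertices[of e] lo_in_vertices[of e] by (cases "lo F e") (auto simp: alive_def)
  then show ?thesis
    by blast
qed

lemma lower_edges_not_alive: "v \<notin> T \<Longrightarrow> lower_edges F v \<inter> alive T = {}"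
  by (auto simp: lower_edges_def alive_def)

lemma alive_insert:
  assumes "topo_sorted (flow_graph F) (xs @ v # ys)" "v \<notin> set xs"
  shows "alive (insert v (set xs)) = alive (set xs) - upper_edges F v \<union> lower_edges F v"
proof -
  have "u \<notin> insert v (set xs)" if "e \<in> fE F" "up F e = Some v" "lo F e = Some u" for e u
    using topo_sorted_no_back_edge[OF assms(1)] that by (auto simp: flow_graph_def)
  then show ?thesis
    using assms(2) by (auto simp: alive_def upper_edges_def lower_edges_def)
qed

lemma upper_edges_alive:
  assumes "topo_sorted (flow_graph F) (xs @ v # ys)" "distinct (xs @ v # ys)"
    and "set (xs @ v # ys) = fV F"
  shows "upper_edges F v \<subseteq> alive (set xs)"
proof
  fix e assume e: "e \<in> upper_edges F v"
  have "u \<in> set xs" if u: "up F e = Some u" for u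
  proof (rule ccontr)
    assume "u \<notin> set xs"
    moreover have "u \<in> fV F"
      using e u up_in_vertices by (auto simp: upper_edges_def)
    ultimately have "u \<in> insert v (set ys)"
      using assms(3) by auto
    moreover have "(u, v) \<in> flow_graph F"
      using e u by (auto simp: upper_edges_def flow_graph_def)
    ultimately show False
      using topo_sorted_no_edge_from_later[OF assms(1)] by blast
  qed
  then show "e \<in> alive (set xs)"
    using e assms(2) by (auto simp: alive_def upper_edges_def)
qed

section \<open>One block of rule applications per vertex\<close>

text \<open>All edges are occurrences of the same atom name, the polarity choosing between a and its
  dual, and edge e carries the label enc e. A state is the disjunction of such occurrences, where
  None stands for a unit t left behind by a coweakening or a cut.\<close>

definition edge_atom :: "'e \<Rightarrow> atom" where
  "edge_atom e = (0, pol e)"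

fun item :: "'e option \<Rightarrow> aform" where
  "item None = TT"
| "item (Some e) = At (edge_atom e) (enc e)"

fun state :: "'e option list \<Rightarrow> aform" where
  "state [] = TT"
| "state (x # xs) = Dis (item x) (state xs)"

lemma labs_state: "labs (state L) = map enc (somes L)"
  by (induction L rule: somes.induct) auto

lemma distinct_labs_state:
  "distinct (somes L) \<Longrightarrow> set (somes L) \<subseteq> fE F \<Longrightarrow> distinct (labs (state L))"
  using enc_inj by (simp add: labs_state distinct_map inj_on_subset)

lemma nsteps_state_remove1: "x \<in> set L \<Longrightarrow> nstep\<^sup>*\<^sup>* (state L) (Dis (item x) (state (remove1 x L)))"
proof (induction L)
  case (Cons y L)
  show ?case
  proof (cases "y = x")
    case False
    then have "nstep\<^sup>*\<^sup>* (state (y # L)) (Dis (item y) (Dis (item x) (state (remove1 x L))))"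
      using Cons by (auto intro: nsteps_congs)
    also have "nstep\<^sup>*\<^sup>* \<dots> (Dis (item x) (Dis (item y) (state (remove1 x L))))"
      by (rule nsteps_Dis_swap)
    finally show ?thesis
      using False by simp
  qed simp
qed simp

lemma nsteps_state_pick:
  assumes "distinct us" "set us \<subseteq> set (somes L)" "distinct (somes L)"
  obtains R where "nstep\<^sup>*\<^sup>* (state L) (state (map Some us @ R))"
    "distinct (us @ somes R)" "set (us @ somes R) = set (somes L)"
  using assms
proof (induction us arbitrary: L thesis)
  case Nil
  then show ?case by fastforce
next
  case (Cons u us)
  define L1 where "L1 = remove1 (Some u) L"
  have "Some u \<in> set L"
    using Cons.prems(3) by (simp add: Some_in_set_iff)
  then have first: "nstep\<^sup>*\<^sup>* (state L) (Dis (item (Some u)) (state L1))"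
    unfolding L1_def by (rule nsteps_state_remove1)
  have somes_L1: "distinct (somes L1)" "set (somes L1) = set (somes L) - {u}"
    using Cons.prems(4) by (simp_all add: L1_def somes_remove1)
  obtain R where R: "nstep\<^sup>*\<^sup>* (state L1) (state (map Some us @ R))"
    "distinct (us @ somes R)" "set (us @ somes R) = set (somes L1)"
    using Cons.IH[of L1] Cons.prems(2-3) somes_L1 by auto
  have "nstep\<^sup>*\<^sup>* (state L) (state (map Some (u # us) @ R))"
    using first nsteps_congs(2)[OF R(1), of "item (Some u)"] by (simp add: rtranclp_trans)
  moreover have "distinct ((u # us) @ somes R)" "set ((u # us) @ somes R) = set (somes L)"
    using R(2,3) somes_L1(2) Cons.prems(3) by auto
  ultimately show ?case
    using Cons.prems(1) by blast
qed

definition atomic_step :: "aform \<Rightarrow> 'v \<Rightarrow> aform \<Rightarrow> bool" where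
  "atomic_step A v B \<longleftrightarrow> (\<exists>c X Y. A = fill c X \<and> B = fill c Y \<and> atomic_rule (eta F v) X Y \<and>
     set (labs X) = enc ` upper_edges F v \<and> set (labs Y) = enc ` lower_edges F v \<and>
     distinct (labs B))"

definition block :: "aform \<Rightarrow> 'v \<Rightarrow> aform \<Rightarrow> bool" where
  "block A v B \<longleftrightarrow> (\<exists>A' B'. nstep\<^sup>*\<^sup>* A A' \<and> atomic_step A' v B' \<and> nstep\<^sup>*\<^sup>* B' B)"

lemma state_blockI:
  assumes "nstep\<^sup>*\<^sup>* (state L) (fill c X)" "atomic_rule (eta F v) X Y"
    and "set (labs X) = enc ` upper_edges F v" "set (labs Y) = enc ` lower_edges F v"
    and "nstep\<^sup>*\<^sup>* (fill c Y) (state L')" "distinct (somes L')" "set (somes L') \<subseteq> fE F"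
  shows "block (state L) v (state L')"
proof -
  have "distinct (labs (fill c Y))"
    using distinct_labs_state[OF assms(6,7)] nsteps_distinct_labs[OF assms(5)] by simp
  then show ?thesis
    using assms unfolding block_def atomic_step_def by blast
qed

context
  fixes L :: "'e option list" and v :: 'v
  assumes v: "v \<in> fV F" and L: "distinct (somes L)" "set (somes L) \<subseteq> fE F"
    and upper: "upper_edges F v \<subseteq> set (somes L)" and lower: "lower_edges F v \<inter> set (somes L) = {}"
begin

lemma block_interaction:
  assumes kind: "eta F v = Interaction"
  shows "\<exists>L'. block (state L) v (state L') \<and> set (somes L') \<subseteq> fE F"
proof -
  have "card (upper_edges F v) = 0" "card (lower_edges F v) = 2"
    using edge_counts[OF v] kind by simp_all
  then obtain p q where up: "upper_edges F v = {}" and pq: "lower_edges F v = {p, q}" "p \<noteq> q"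
    using finite_upper_edges by (auto simp: card_2_iff)
  have "pol p \<noteq> pol q"
    using polarity v kind pq unfolding flow_polarity_def by auto
  define L' where "L' = Some p # Some q # L"
  have L': "set (somes L') \<subseteq> fE F"
    using L pq lower_edges_subset[of v] by (auto simp: L'_def)
  have "block (state L) v (state L')"
  proof (rule state_blockI)
    show "nstep\<^sup>*\<^sup>* (state L) (fill (DisL Hole (state L)) TT)"
      by (simp add: nsteps_Dis_TT_left)
    show "atomic_rule (eta F v) TT (Dis (item (Some p)) (item (Some q)))"
      using atomic_rule.ai_down[of "edge_atom p" "enc p" "enc q"] kind \<open>pol p \<noteq> pol q\<close>
      by (simp add: bar_def edge_atom_def)
    show "nstep\<^sup>*\<^sup>* (fill (DisL Hole (state L)) (Dis (item (Some p)) (item (Some q)))) (state L')"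
      unfolding L'_def by (simp, intro nsteps_intros)
    show "distinct (somes L')"
      using L lower pq by (auto simp: L'_def)
  qed (use L' up pq in simp_all)
  with L' show ?thesis by blast
qed

lemma block_weakening:
  assumes kind: "eta F v = Weakening"
  shows "\<exists>L'. block (state L) v (state L') \<and> set (somes L') \<subseteq> fE F"
proof -
  have "card (upper_edges F v) = 0" "card (lower_edges F v) = 1"
    using edge_counts[OF v] kind by simp_all
  then obtain p where up: "upper_edges F v = {}" and p: "lower_edges F v = {p}"
    using finite_upper_edges by (auto simp: card_1_singleton_iff)
  define L' where "L' = Some p # L"
  have L': "set (somes L') \<subseteq> fE F"
    using L p lower_edges_subset[of v] by (auto simp: L'_def)
  have "block (state L) v (state L')"
  proof (rule state_blockI)
    show "nstep\<^sup>*\<^sup>* (state L) (fill (DisL Hole (state L)) FF)"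
      by (simp add: nsteps_Dis_FF_left)
    show "atomic_rule (eta F v) FF (item (Some p))"
      using atomic_rule.aw_down kind by simp
    show "nstep\<^sup>*\<^sup>* (fill (DisL Hole (state L)) (item (Some p))) (state L')"
      by (simp add: L'_def)
    show "distinct (somes L')"
      using L lower p by (auto simp: L'_def)
  qed (use L' up p in simp_all)
  with L' show ?thesis by blast
qed

lemma block_coweakening:
  assumes kind: "eta F v = Coweakening"
  shows "\<exists>L'. block (state L) v (state L') \<and> set (somes L') \<subseteq> fE F"
proof -
  have "card (upper_edges F v) = 1" "card (lower_edges F v) = 0"
    using edge_counts[OF v] kind by simp_all
  then obtain x where x: "upper_edges F v = {x}" and lo: "lower_edges F v = {}"
    using finite_lower_edges by (auto simp: card_1_singleton_iff)
  obtain R where R: "nstep\<^sup>*\<^sup>* (state L) (state (map Some [x] @ R))"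
    "distinct ([x] @ somes R)" "set ([x] @ somes R) = set (somes L)"
    using nsteps_state_pick[of "[x]" L] upper x L(1) by auto
  define L' where "L' = None # R"
  have L': "set (somes L') \<subseteq> fE F"
    using L R(3) by (auto simp: L'_def)
  have "block (state L) v (state L')"
  proof (rule state_blockI)
    show "nstep\<^sup>*\<^sup>* (state L) (fill (DisL Hole (state R)) (item (Some x)))"
      using R(1) by simp
    show "atomic_rule (eta F v) (item (Some x)) TT"
      using atomic_rule.aw_up kind by simp
    show "nstep\<^sup>*\<^sup>* (fill (DisL Hole (state R)) TT) (state L')"
      by (simp add: L'_def)
    show "distinct (somes L')"
      using R(2) by (simp add: L'_def)
  qed (use L' x lo in simp_all)
  with L' show ?thesis by blast
qed

lemma block_contraction:
  assumes kind: "eta F v = Contraction"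
  shows "\<exists>L'. block (state L) v (state L') \<and> set (somes L') \<subseteq> fE F"
proof -
  have "card (upper_edges F v) = 2" "card (lower_edges F v) = 1"
    using edge_counts[OF v] kind by simp_all
  then obtain x y z where xy: "upper_edges F v = {x, y}" "x \<noteq> y" and z: "lower_edges F v = {z}"
    by (auto simp: card_2_iff card_1_singleton_iff)
  have "pol x = pol z" "pol y = pol z"
    using polarity v kind xy z unfolding flow_polarity_def by auto
  obtain R where R: "nstep\<^sup>*\<^sup>* (state L) (state (map Some [x, y] @ R))"
    "distinct ([x, y] @ somes R)" "set ([x, y] @ somes R) = set (somes L)"
    using nsteps_state_pick[of "[x, y]" L] upper xy L(1) by auto
  define L' where "L' = Some z # R"
  have L': "set (somes L') \<subseteq> fE F"
    using L R(3) z lower_edges_subset[of v] by (auto simp: L'_def)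
  have "block (state L) v (state L')"
  proof (rule state_blockI)
    have "nstep\<^sup>*\<^sup>* (state (map Some [x, y] @ R)) (Dis (Dis (item (Some x)) (item (Some y))) (state R))"
      by (simp, intro nsteps_intros)
    then show "nstep\<^sup>*\<^sup>* (state L) (fill (DisL Hole (state R)) (Dis (item (Some x)) (item (Some y))))"
      using R(1) by (simp add: rtranclp_trans)
    show "atomic_rule (eta F v) (Dis (item (Some x)) (item (Some y))) (item (Some z))"
      using atomic_rule.ac_down[of "edge_atom z" "enc x" "enc y" "enc z"] kind
        \<open>pol x = pol z\<close> \<open>pol y = pol z\<close> by (simp add: edge_atom_def)
    show "nstep\<^sup>*\<^sup>* (fill (DisL Hole (state R)) (item (Some z))) (state L')"
      by (simp add: L'_def)
    show "distinct (somes L')"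
      using R(2,3) lower z by (auto simp: L'_def)
  qed (use L' xy z in simp_all)
  with L' show ?thesis by blast
qed

lemma block_cocontraction:
  assumes kind: "eta F v = Cocontraction"
  shows "\<exists>L'. block (state L) v (state L') \<and> set (somes L') \<subseteq> fE F"
proof -
  have "card (upper_edges F v) = 1" "card (lower_edges F v) = 2"
    using edge_counts[OF v] kind by simp_all
  then obtain x y z where x: "upper_edges F v = {x}" and yz: "lower_edges F v = {y, z}" "y \<noteq> z"
    by (auto simp: card_2_iff card_1_singleton_iff)
  have "pol y = pol x" "pol z = pol x"
    using polarity v kind x yz unfolding flow_polarity_def by auto
  obtain R where R: "nstep\<^sup>*\<^sup>* (state L) (state (map Some [x] @ R))"
    "distinct ([x] @ somes R)" "set ([x] @ somes R) = set (somes L)"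
    using nsteps_state_pick[of "[x]" L] upper x L(1) by auto
  define L' where "L' = Some y # Some z # None # R"
  have L': "set (somes L') \<subseteq> fE F"
    using L R(3) yz lower_edges_subset[of v] by (auto simp: L'_def)
  have "block (state L) v (state L')"
  proof (rule state_blockI)
    show "nstep\<^sup>*\<^sup>* (state L) (fill (DisL Hole (state R)) (item (Some x)))"
      using R(1) by simp
    show "atomic_rule (eta F v) (item (Some x)) (Con (item (Some y)) (item (Some z)))"
      using atomic_rule.ac_up[of "edge_atom x" "enc x" "enc y" "enc z"] kind
        \<open>pol y = pol x\<close> \<open>pol z = pol x\<close> by (simp add: edge_atom_def)
    have "nstep\<^sup>*\<^sup>* (Dis (Con (item (Some y)) (item (Some z))) (state R))
        (Dis (Dis (item (Some y)) (Dis (item (Some z)) TT)) (state R))"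
      by (intro nsteps_congs nsteps_Con_to_Dis)
    also have "nstep\<^sup>*\<^sup>* \<dots> (Dis (item (Some y)) (Dis (Dis (item (Some z)) TT) (state R)))"
      by (intro nsteps_intros)
    also have "nstep\<^sup>*\<^sup>* \<dots> (state L')"
      unfolding L'_def by (simp, intro nsteps_intros)
    finally show "nstep\<^sup>*\<^sup>* (fill (DisL Hole (state R)) (Con (item (Some y)) (item (Some z)))) (state L')"
      by simp
    show "distinct (somes L')"
      using R(2,3) lower yz by (auto simp: L'_def)
  qed (use L' x yz in simp_all)
  with L' show ?thesis by blast
qed

lemma block_cut:
  assumes kind: "eta F v = Cut"
  shows "\<exists>L'. block (state L) v (state L') \<and> set (somes L') \<subseteq> fE F"
proof -
  have "card (upper_edges F v) = 2" "card (lower_edges F v) = 0"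
    using edge_counts[OF v] kind by simp_all
  then obtain x y where xy: "upper_edges F v = {x, y}" "x \<noteq> y" and lo: "lower_edges F v = {}"
    using finite_lower_edges by (auto simp: card_2_iff)
  have "pol x \<noteq> pol y"
    using polarity v kind xy unfolding flow_polarity_def by auto
  obtain R where R: "nstep\<^sup>*\<^sup>* (state L) (state (map Some [x, y] @ R))"
    "distinct ([x, y] @ somes R)" "set ([x, y] @ somes R) = set (somes L)"
    using nsteps_state_pick[of "[x, y]" L] upper xy L(1) by auto
  define c where "c = DisL (DisL (DisL Hole TT) TT) (state R)"
  define L' where "L' = None # R"
  have L': "set (somes L') \<subseteq> fE F"
    using L R(3) by (auto simp: L'_def)
  have "block (state L) v (state L')"
  proof (rule state_blockI)
    note R(1)
    also have "nstep\<^sup>*\<^sup>* (state (map Some [x, y] @ R)) (Dis (Dis (item (Some x)) (item (Some y))) (state R))"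
      by (simp, intro nsteps_intros)
    also have "nstep\<^sup>*\<^sup>* \<dots> (fill c (Con (item (Some y)) (item (Some x))))"
      unfolding c_def by (simp, intro nsteps_congs nsteps_Dis_to_Con)
    finally show "nstep\<^sup>*\<^sup>* (state L) (fill c (Con (item (Some y)) (item (Some x))))" .
    show "atomic_rule (eta F v) (Con (item (Some y)) (item (Some x))) FF"
      using atomic_rule.ai_up[of "edge_atom y" "enc y" "enc x"] kind \<open>pol x \<noteq> pol y\<close>
      by (simp add: bar_def edge_atom_def)
    show "nstep\<^sup>*\<^sup>* (fill c FF) (state L')"
      unfolding c_def L'_def by (simp, intro nsteps_congs nsteps_FF_TT_TT)
    show "distinct (somes L')"
      using R(2) by (simp add: L'_def)
  qed (use L' xy lo in auto)
  with L' show ?thesis by blast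
qed

lemma block_exists: "\<exists>L'. block (state L) v (state L') \<and> set (somes L') \<subseteq> fE F"
  using block_interaction block_weakening block_coweakening block_contraction block_cocontraction
    block_cut by (cases "eta F v") auto

end

end

context flow_labelling
begin

fun flow_step :: "aform \<Rightarrow> 'v option \<Rightarrow> aform \<Rightarrow> bool" where
  "flow_step A None B \<longleftrightarrow> nstep A B"
| "flow_step A (Some v) B \<longleftrightarrow> atomic_step A v B"

primrec step_seq :: "aform \<Rightarrow> 'v option list \<Rightarrow> aform list \<Rightarrow> bool" where
  "step_seq A [] fs \<longleftrightarrow> fs = []"
| "step_seq A (w # ws) fs \<longleftrightarrow>
     (case fs of [] \<Rightarrow> False | B # fs' \<Rightarrow> flow_step A w B \<and> step_seq B ws fs')"

lemma step_seq_nth: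
  "step_seq A ws fs \<Longrightarrow>
    length fs = length ws \<and> (\<forall>i < length ws. flow_step ((A # fs) ! i) (ws ! i) ((A # fs) ! Suc i))"
proof (induction ws arbitrary: A fs)
  case (Cons w ws)
  then obtain B fs' where "fs = B # fs'" "flow_step A w B" "step_seq B ws fs'"
    by (auto split: list.splits)
  with Cons.IH show ?case
    by (auto simp: less_Suc_eq_0_disj)
qed simp

lemma step_seq_trans:
  assumes "step_seq A ws1 fs1" "last (A # fs1) = B" "step_seq B ws2 fs2" "last (B # fs2) = C"
  shows "step_seq A (ws1 @ ws2) (fs1 @ fs2) \<and> last (A # fs1 @ fs2) = C"
  using assms
proof (induction fs1 arbitrary: A ws1)
  case Nil
  then show ?case by (cases ws1) auto
next
  case (Cons A' fs1)
  then show ?case by (cases ws1) auto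
qed

lemma nsteps_step_seq:
  "nstep\<^sup>*\<^sup>* A B \<Longrightarrow> \<exists>ws fs. step_seq A ws fs \<and> last (A # fs) = B \<and> somes ws = []"
proof (induction rule: converse_rtranclp_induct)
  case base
  then show ?case by (intro exI[of _ "[]"]) simp
next
  case (step A A')
  then obtain ws fs where "step_seq A' ws fs" "last (A' # fs) = B" "somes ws = []"
    by blast
  with step.hyps(1) show ?case
    by (intro exI[of _ "None # ws"] exI[of _ "A' # fs"]) simp
qed

lemma block_step_seq:
  assumes "block A v B"
  shows "\<exists>ws fs. step_seq A ws fs \<and> last (A # fs) = B \<and> somes ws = [v]"
proof -
  obtain A' B' where steps: "nstep\<^sup>*\<^sup>* A A'" "atomic_step A' v B'" "nstep\<^sup>*\<^sup>* B' B"
    using assms unfolding block_def by blast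
  obtain ws1 fs1 where 1: "step_seq A ws1 fs1" "last (A # fs1) = A'" "somes ws1 = []"
    using nsteps_step_seq[OF steps(1)] by blast
  have 2: "step_seq A' [Some v] [B']" "last (A' # [B']) = B'"
    using steps(2) by simp_all
  obtain ws3 fs3 where 3: "step_seq B' ws3 fs3" "last (B' # fs3) = B" "somes ws3 = []"
    using nsteps_step_seq[OF steps(3)] by blast
  have 12: "step_seq A (ws1 @ [Some v]) (fs1 @ [B']) \<and> last (A # fs1 @ [B']) = B'"
    by (rule step_seq_trans[OF 1(1,2) 2])
  then have "step_seq A ((ws1 @ [Some v]) @ ws3) ((fs1 @ [B']) @ fs3) \<and>
      last (A # (fs1 @ [B']) @ fs3) = B"
    using step_seq_trans[OF _ _ 3(1,2)] by blast
  then show ?thesis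
    using 1(3) 3(3) by (intro exI[of _ "(ws1 @ [Some v]) @ ws3"] exI[of _ "(fs1 @ [B']) @ fs3"]) simp
qed

end

locale step_sequence = flow_labelling F enc pol
    for F :: "('v, 'e) flow" and enc :: "'e \<Rightarrow> nat" and pol :: "'e \<Rightarrow> bool" +
  fixes A :: aform and ws :: "'v option list" and fs :: "aform list"
  assumes seq: "step_seq A ws fs" and distinct_labs_A: "distinct (labs A)"
    and labs_A: "set (labs A) = enc ` alive {}"
    and distinct_ws: "distinct (somes ws)" and sorted_ws: "topo_sorted (flow_graph F) (somes ws)"
begin

lemma length_fs: "length fs = length ws"
  using step_seq_nth[OF seq] by simp

lemma seq_step: "i < length ws \<Longrightarrow> flow_step ((A # fs) ! i) (ws ! i) ((A # fs) ! Suc i)"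
  using step_seq_nth[OF seq] by simp

lemma last_fs: "last (A # fs) = (A # fs) ! length ws"
  by (subst last_conv_nth) (simp_all add: length_fs)

lemma distinct_labs_seq: "j \<le> length ws \<Longrightarrow> distinct (labs ((A # fs) ! j))"
proof (induction j)
  case (Suc i)
  then have "flow_step ((A # fs) ! i) (ws ! i) ((A # fs) ! Suc i)"
    using seq_step by simp
  with Suc show ?case
    by (cases "ws ! i") (auto simp: atomic_step_def dest: nsteps_distinct_labs[OF r_into_rtranclp])
qed (simp add: distinct_labs_A)

lemma somes_ws_split:
  "i < length ws \<Longrightarrow> ws ! i = Some v \<Longrightarrow>
    somes ws = somes (take i ws) @ v # somes (drop (Suc i) ws) \<and> v \<notin> set (somes (take i ws))"
  using somes_split[of i ws v] distinct_ws by auto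

lemma alive_Suc:
  assumes "i < length ws" "ws ! i = Some v"
  shows "alive (set (somes (take (Suc i) ws)))
    = alive (set (somes (take i ws))) - upper_edges F v \<union> lower_edges F v"
  using alive_insert[of "somes (take i ws)" v] sorted_ws somes_ws_split[OF assms] set_somes_take_Suc[OF assms(1)] assms
  by auto

lemma labs_seq:
  "j \<le> length ws \<Longrightarrow> set (labs ((A # fs) ! j)) = enc ` alive (set (somes (take j ws)))"
proof (induction j)
  case 0
  then show ?case by (simp add: labs_A)
next
  case (Suc i)
  then have i: "i < length ws" and IH: "set (labs ((A # fs) ! i)) = enc ` alive (set (somes (take i ws)))"
    by simp_all
  show ?case
  proof (cases "ws ! i")
    case None
    then have "nstep ((A # fs) ! i) ((A # fs) ! Suc i)"
      using seq_step[OF i] by simp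
    then have "set (labs ((A # fs) ! Suc i)) = set (labs ((A # fs) ! i))"
      by (metis nsteps_mset_labs r_into_rtranclp set_mset_mset)
    moreover have "set (somes (take (Suc i) ws)) = set (somes (take i ws))"
      using set_somes_take_Suc[OF i] None by simp
    ultimately show ?thesis
      using IH by simp
  next
    case (Some v)
    then obtain c X Y where step: "(A # fs) ! i = fill c X" "(A # fs) ! Suc i = fill c Y"
      "set (labs X) = enc ` upper_edges F v" "set (labs Y) = enc ` lower_edges F v"
      using seq_step[OF i] by (auto simp: atomic_step_def)
    let ?T = "alive (set (somes (take i ws)))"
    have "set (labs (fill c FF)) = set (labs ((A # fs) ! i)) - set (labs X)"
      using step(1) set_labs_fill[of c X] distinct_labs_fill distinct_labs_seq[of i] i by auto
    also have "\<dots> = enc ` ?T - enc ` upper_edges F v"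
      using IH step(3) by simp
    also have "\<dots> = enc ` (?T - upper_edges F v)"
      by (rule inj_on_image_set_diff[OF enc_inj, symmetric]) (use alive_subset upper_edges_subset in blast)+
    finally have "set (labs ((A # fs) ! Suc i)) = enc ` (?T - upper_edges F v \<union> lower_edges F v)"
      using step(2,4) set_labs_fill[of c Y] by (simp add: image_Un)
    then show ?thesis
      using alive_Suc[OF i Some] by simp
  qed
qed

lemma enc_in_labs_seq:
  "j \<le> length ws \<Longrightarrow> e \<in> fE F \<Longrightarrow>
    enc e \<in> set (labs ((A # fs) ! j)) \<longleftrightarrow> e \<in> alive (set (somes (take j ws)))"
  using labs_seq inj_on_image_mem_iff[OF enc_inj _ alive_subset] by simp

lemma last_state_alive:
  assumes "last (A # fs) = state L" "set (somes L) \<subseteq> fE F"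
  shows "set (somes L) = alive (set (somes ws))" "distinct (somes L)"
proof -
  have last: "(A # fs) ! length ws = state L"
    by (metis assms(1) last_fs)
  have "enc ` set (somes L) = enc ` alive (set (somes ws))"
    using labs_seq[of "length ws"] last by (simp add: labs_state)
  then show "set (somes L) = alive (set (somes ws))"
    using inj_on_image_eq_iff[OF enc_inj assms(2) alive_subset] by simp
  show "distinct (somes L)"
    using distinct_labs_seq[of "length ws"] last by (simp add: labs_state distinct_map)
qed

lemma lower_edges_fresh:
  assumes "i < length ws" "ws ! i = Some v" "j \<le> i"
  shows "enc ` lower_edges F v \<inter> set (labs ((A # fs) ! j)) = {}"
proof -
  have "v \<notin> set (somes (take j ws))"
    using somes_ws_split[OF assms(1,2)] set_somes_take_mono[OF assms(3), of ws] by auto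
  then have "lower_edges F v \<inter> alive (set (somes (take j ws))) = {}"
    by (rule lower_edges_not_alive)
  then show ?thesis
    using labs_seq[of j] assms
    by (simp add: inj_on_image_Int[OF enc_inj lower_edges_subset alive_subset, symmetric])
qed

lemma label_appears_iff:
  assumes "i < length ws" "e \<in> fE F"
  shows "enc e \<notin> set (labs ((A # fs) ! i)) \<and> enc e \<in> set (labs (fs ! i)) \<longleftrightarrow> ws ! i = up F e \<and> ws ! i \<noteq> None"
proof (cases "ws ! i")
  case None
  then show ?thesis
    using enc_in_labs_seq[OF _ assms(2), of i] enc_in_labs_seq[OF _ assms(2), of "Suc i"]
      set_somes_take_Suc[OF assms(1)] assms(1) by simp
next
  case (Some v)
  then have "lower_edges F v \<inter> alive (set (somes (take i ws))) = {}"
    using somes_ws_split[OF assms(1) Some] lower_edges_not_alive by blast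
  then show ?thesis
    using enc_in_labs_seq[OF _ assms(2), of i] enc_in_labs_seq[OF _ assms(2), of "Suc i"]
      alive_Suc[OF assms(1) Some] assms Some
    by (auto simp: lower_edges_def)
qed

end

section \<open>The flow of a complete step sequence\<close>

locale complete_step_sequence = step_sequence F enc pol A ws fs
    for F :: "('v, 'e) flow" and enc pol A ws fs +
  assumes vertices_ws: "set (somes ws) = fV F"
begin

lemma label_disappears_iff:
  assumes "i < length ws" "e \<in> fE F"
  shows "enc e \<in> set (labs ((A # fs) ! i)) \<and> enc e \<notin> set (labs (fs ! i)) \<longleftrightarrow> ws ! i = lo F e \<and> ws ! i \<noteq> None"
proof (cases "ws ! i")
  case None
  then show ?thesis
    using enc_in_labs_seq[OF _ assms(2), of i] enc_in_labs_seq[OF _ assms(2), of "Suc i"]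
      set_somes_take_Suc[OF assms(1)] assms(1) by simp
next
  case (Some v)
  have split: "somes ws = somes (take i ws) @ v # somes (drop (Suc i) ws)"
    using somes_ws_split[OF assms(1) Some] by blast
  then have "upper_edges F v \<subseteq> alive (set (somes (take i ws)))"
    using upper_edges_alive[of "somes (take i ws)" v] sorted_ws distinct_ws vertices_ws by simp
  then show ?thesis
    using enc_in_labs_seq[OF _ assms(2), of i] enc_in_labs_seq[OF _ assms(2), of "Suc i"]
      alive_Suc[OF assms(1) Some] upper_lower_disjoint[of v] assms Some
    by (auto simp: upper_edges_def)
qed

lemma vertex_position:
  assumes "v \<in> fV F"
  shows "\<exists>i < length ws. ws ! i = Some v"
proof -
  have "Some v \<in> set ws"
    using assms vertices_ws by (simp add: Some_in_set_iff)
  then show ?thesis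
    by (simp add: in_set_conv_nth)
qed

definition position :: "'v \<Rightarrow> nat" where
  "position v = (LEAST i. i < length ws \<and> ws ! i = Some v)"

lemma position: "v \<in> fV F \<Longrightarrow> position v < length ws \<and> ws ! position v = Some v"
  unfolding position_def using LeastI_ex[OF vertex_position] by blast

lemma position_nth:
  assumes "i < length ws" "ws ! i \<noteq> None"
  shows "position (the (ws ! i)) = i"
proof -
  have "Some (the (ws ! i)) \<in> set ws"
    using assms nth_mem by fastforce
  then have "position (the (ws ! i)) < length ws \<and> ws ! position (the (ws ! i)) = Some (the (ws ! i))"
    using position vertices_ws by (simp add: Some_in_set_iff)
  then show ?thesis
    using somes_nth_unique[OF distinct_ws] assms by fastforce
qed

abbreviation derivation_rules :: "rule_kind option list" where
  "derivation_rules \<equiv> map (map_option (eta F)) ws"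

lemma sks_derivation: "sks_derivation (A # fs) derivation_rules"
  unfolding sks_derivation_def
proof (intro conjI allI impI)
  show "length (A # fs) = Suc (length derivation_rules)"
    by (simp add: length_fs)
  show "distinct (labs ((A # fs) ! j))" if "j < length (A # fs)" for j
    using distinct_labs_seq that by (simp add: length_fs)
  fix i assume "i < length derivation_rules"
  then have i: "i < length ws" by simp
  show "\<exists>c X Y. (A # fs) ! i = fill c X \<and> (A # fs) ! Suc i = fill c Y \<and> nonatomic X Y"
    if "derivation_rules ! i = None"
    using seq_step[OF i] that i by (simp add: nstep_def)
  fix k assume "derivation_rules ! i = Some k"
  then obtain v where v: "ws ! i = Some v" "k = eta F v"
    using i by auto
  then obtain c X Y where cXY: "(A # fs) ! i = fill c X" "(A # fs) ! Suc i = fill c Y"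
    "atomic_rule k X Y" and Y: "set (labs Y) = enc ` lower_edges F v"
    using seq_step[OF i] by (auto simp: atomic_step_def)
  have "\<forall>j \<le> i. \<forall>e \<in> set (labs Y). e \<notin> set (labs ((A # fs) ! j))"
    using lower_edges_fresh[OF i v(1)] unfolding Y by blast
  with cXY show "\<exists>c X Y. (A # fs) ! i = fill c X \<and> (A # fs) ! Suc i = fill c Y \<and> atomic_rule k X Y \<and>
      (\<forall>j \<le> i. \<forall>e \<in> set (labs Y). e \<notin> set (labs ((A # fs) ! j)))"
    by blast
qed simp

abbreviation derived_flow :: "(nat, nat) flow" where
  "derived_flow \<equiv> flow_of (A # fs) derivation_rules"

lemma edges_derived_flow: "fE derived_flow = enc ` fE F"
proof -
  have "\<exists>j \<le> length ws. e \<in> alive (set (somes (take j ws)))" if e: "e \<in> fE F" for e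
  proof (cases "up F e")
    case None
    then show ?thesis
      using e alive_empty by auto
  next
    case (Some v)
    then have "position v < length ws" "ws ! position v = Some v"
      using position up_in_vertices e by blast+
    then show ?thesis
      using alive_Suc[of "position v" v] Some e
      by (intro exI[of _ "Suc (position v)"]) (auto simp: lower_edges_def)
  qed
  then have "enc ` fE F \<subseteq> (\<Union>j \<le> length ws. set (labs ((A # fs) ! j)))"
    using labs_seq by blast
  moreover have "set (labs ((A # fs) ! j)) \<subseteq> enc ` fE F" if "j \<le> length ws" for j
    using labs_seq[OF that] alive_subset by auto
  ultimately have "(\<Union>j \<le> length ws. set (labs ((A # fs) ! j))) = enc ` fE F"
    by blast
  then show ?thesis
    by (simp add: flow_of_def length_fs lessThan_Suc_atMost)
qed

lemma up_derived_flow: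
  assumes e: "e \<in> fE F"
  shows "up derived_flow (enc e) = map_option position (up F e)"
proof (cases "up F e")
  case None
  then have "enc e \<in> set (labs A)"
    using enc_in_labs_seq[of 0, OF _ e] alive_empty e by simp
  then show ?thesis
    using None by (simp add: flow_of_def)
next
  case (Some v)
  then have "enc e \<notin> set (labs A)"
    using enc_in_labs_seq[of 0, OF _ e] alive_empty by simp
  moreover have "(\<lambda>i. i < length ws \<and> enc e \<notin> set (labs ((A # fs) ! i)) \<and> enc e \<in> set (labs (fs ! i)))
      = (\<lambda>i. i < length ws \<and> ws ! i = Some v)"
    using label_appears_iff[OF _ e] Some by fastforce
  ultimately show ?thesis
    using Some by (simp add: flow_of_def position_def)
qed

lemma lo_derived_flow:
  assumes e: "e \<in> fE F"
  shows "lo derived_flow (enc e) = map_option position (lo F e)"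
proof -
  have lo: "lo derived_flow l = (if l \<in> set (labs ((A # fs) ! length ws)) then None
      else Some (LEAST i. i < length ws \<and> l \<in> set (labs ((A # fs) ! i)) \<and> l \<notin> set (labs (fs ! i))))"
    for l
    unfolding flow_of_def last_fs by simp
  have "enc e \<in> set (labs ((A # fs) ! length ws)) \<longleftrightarrow> lo F e = None"
    using enc_in_labs_seq[of "length ws", OF _ e] e vertices_ws alive_vertices by simp
  moreover have "(\<lambda>i. i < length ws \<and> enc e \<in> set (labs ((A # fs) ! i)) \<and> enc e \<notin> set (labs (fs ! i)))
      = (\<lambda>i. i < length ws \<and> ws ! i = Some v)" if "lo F e = Some v" for v
    using label_disappears_iff[OF _ e] that by fastforce
  ultimately show ?thesis
    by (cases "lo F e") (simp_all add: lo position_def)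
qed

lemma flow_iso_derived_flow: "flow_iso derived_flow F"
proof -
  define f where "f i = the (ws ! i)" for i
  have V: "fV derived_flow = {i. i < length ws \<and> ws ! i \<noteq> None}"
    by (auto simp: flow_of_def)
  have f_position: "f (position v) = v" if "v \<in> fV F" for v
    using position[OF that] by (simp add: f_def)
  have "bij_betw f (fV derived_flow) (fV F)"
  proof (rule bij_betw_byWitness[where f' = position])
    show "\<forall>i \<in> fV derived_flow. position (f i) = i"
      using position_nth by (simp add: V f_def)
    show "\<forall>v \<in> fV F. f (position v) = v"
      using f_position by blast
    show "position ` fV F \<subseteq> fV derived_flow"
      using position by (auto simp: V)
    show "f ` fV derived_flow \<subseteq> fV F"
    proof
      fix u assume "u \<in> f ` fV derived_flow"
      then obtain i where "i < length ws" "ws ! i = Some u"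
        by (auto simp: V f_def)
      then have "Some u \<in> set ws"
        by (metis nth_mem)
      then show "u \<in> fV F"
        using vertices_ws by (simp add: Some_in_set_iff)
    qed
  qed
  moreover have "bij_betw (inv_into (fE F) enc) (fE derived_flow) (fE F)"
    using edges_derived_flow enc_inj by (simp add: bij_betw_inv_into inj_on_imp_bij_betw)
  moreover have "\<forall>i \<in> fV derived_flow. eta F (f i) = eta derived_flow i"
    unfolding V by (auto simp: f_def flow_of_def)
  moreover have "up F (inv_into (fE F) enc l) = map_option f (up derived_flow l) \<and>
      lo F (inv_into (fE F) enc l) = map_option f (lo derived_flow l)" if l: "l \<in> fE derived_flow" for l
  proof -
    obtain e where e: "e \<in> fE F" "l = enc e"
      using l edges_derived_flow by auto
    have "up F e = map_option f (map_option position (up F e))"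
      using up_in_vertices[OF e(1)] f_position by (cases "up F e") simp_all
    moreover have "lo F e = map_option f (map_option position (lo F e))"
      using lo_in_vertices[OF e(1)] f_position by (cases "lo F e") simp_all
    ultimately show ?thesis
      using up_derived_flow[OF e(1)] lo_derived_flow[OF e(1)] inv_into_f_f[OF enc_inj e(1)] e(2)
      by simp
  qed
  ultimately show ?thesis
    unfolding flow_iso_def by blast
qed

end

context flow_labelling
begin

lemma step_sequence_from_state:
  assumes "step_seq (state L0) ws fs" "distinct (somes L0)" "set (somes L0) = alive {}"
    and "distinct (somes ws)" "topo_sorted (flow_graph F) (somes ws)"
  shows "step_sequence F enc pol (state L0) ws fs"
  unfolding step_sequence_def step_sequence_axioms_def
  using flow_labelling_axioms assms alive_subset distinct_labs_state[OF assms(2)]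
  by (simp add: labs_state)

lemma step_seq_for_prefix:
  assumes vs: "distinct vs" "set vs = fV F" "topo_sorted (flow_graph F) vs"
    and L0: "distinct (somes L0)" "set (somes L0) = alive {}"
  shows "k \<le> length vs \<Longrightarrow> \<exists>ws fs L. step_seq (state L0) ws fs \<and> somes ws = take k vs \<and>
    last (state L0 # fs) = state L \<and> set (somes L) \<subseteq> fE F"
proof (induction k)
  case 0
  show ?case
    using L0 alive_subset by (intro exI[of _ "[]"] exI[of _ L0]) auto
next
  case (Suc k)
  then obtain ws fs L where run: "step_seq (state L0) ws fs" "somes ws = take k vs"
    and L: "last (state L0 # fs) = state L" "set (somes L) \<subseteq> fE F"
    by auto
  have k: "k < length vs"
    using Suc.prems by simp
  define v where "v = vs ! k"
  have split: "take k vs @ v # drop (Suc k) vs = vs"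
    using id_take_nth_drop[OF k] by (simp add: v_def)
  have parts: "topo_sorted (flow_graph F) (take k vs @ v # drop (Suc k) vs)"
    "distinct (take k vs @ v # drop (Suc k) vs)" "set (take k vs @ v # drop (Suc k) vs) = fV F"
    using vs by (simp_all only: split)
  then have v: "v \<in> fV F" "v \<notin> set (take k vs)"
    by auto
  have "topo_sorted (flow_graph F) (take k vs)"
    using parts(1) topo_sorted_append by blast
  then have "step_sequence F enc pol (state L0) ws fs"
    using step_sequence_from_state[OF run(1) L0] run(2) vs(1) by simp
  then interpret step_sequence F enc pol "state L0" ws fs .
  have "set (somes L) = alive (set (take k vs))" "distinct (somes L)"
    using last_state_alive[OF L] run(2) by simp_all
  then obtain L' where block: "block (state L) v (state L')" and L': "set (somes L') \<subseteq> fE F"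
    using block_exists[OF v(1) _ L(2)] upper_edges_alive[OF parts] lower_edges_not_alive[OF v(2)]
    by auto
  obtain ws' fs' where run': "step_seq (state L) ws' fs'" "last (state L # fs') = state L'"
    "somes ws' = [v]"
    using block_step_seq[OF block] by blast
  have "step_seq (state L0) (ws @ ws') (fs @ fs') \<and> last (state L0 # fs @ fs') = state L'"
    using step_seq_trans[OF run(1) L(1) run'(1,2)] .
  moreover have "somes (ws @ ws') = take (Suc k) vs"
    using run(2) run'(3) k by (simp add: take_Suc_conv_app_nth v_def)
  ultimately show ?case
    using L' by blast
qed

theorem sks_derivation_exists: "\<exists>fs ks. sks_derivation fs ks \<and> flow_iso (flow_of fs ks) F"
proof -
  obtain vs where vs: "distinct vs" "set vs = fV F" "topo_sorted (flow_graph F) vs"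
    using topo_sorted_exists[OF finite_graph acyclic_graph finite_vertices] by blast
  obtain xs where xs: "distinct xs" "set xs = alive {}"
    using finite_distinct_list[OF finite_subset[OF alive_subset finite_edges]] by blast
  obtain ws fs where run: "step_seq (state (map Some xs)) ws fs" "somes ws = vs"
    using step_seq_for_prefix[OF vs, of "map Some xs" "length vs"] xs by auto
  have "complete_step_sequence F enc pol (state (map Some xs)) ws fs"
    unfolding complete_step_sequence_def complete_step_sequence_axioms_def
    using step_sequence_from_state[OF run(1)] run(2) xs vs by simp
  then interpret complete_step_sequence F enc pol "state (map Some xs)" ws fs .
  show ?thesis
    using sks_derivation flow_iso_derived_flow by blast
qed

end

theorem theorem3p8:
  fixes F :: "('v, 'e) flow"
  assumes "atomic_flow F"
  shows "\<exists>fs ks. sks_derivation fs ks \<and> flow_iso (flow_of fs ks) F"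
proof -
  obtain pol where pol: "flow_polarity F pol"
    using atomic_flow_polarity[OF assms] by blast
  have "finite (fE F)"
    using assms by (simp add: atomic_flow_def)
  then obtain enc :: "'e \<Rightarrow> nat" where enc: "inj_on enc (fE F)"
    using finite_imp_inj_to_nat_seg by blast
  interpret flow_labelling F enc pol
    by (rule flow_labelling.intro[OF assms enc pol])
  show ?thesis
    by (rule sks_derivation_exists)
qed

end
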